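(* Let $A,B\in\mathcal{B}(\mathcal{H})$ and let $B=X+iY$ be the Cartesian decomposition of $B$. Then $$w^2(AB\pm BA^* )\leq 2\|A\|^2\left(w(X^2)+w(Y^2)+\sqrt{\left(w(X^2)-w(Y^2)\right)^2+w^2(XY+YX)}\right).$$
   Context: $\mathcal{H}$ is a complex Hilbert space and $\mathcal{B}(\mathcal{H})$ is the algebra of bounded linear operators on $\mathcal{H}$. For $T\in\mathcal{B}(\mathcal{H})$, $w(T)=\sup\{|\langle Tx,x\rangle|:x\in\mathcal{H},\|x\|=1\}$ is the numerical radius and $\|T\|$ the operator norm. The Cartesian decomposition $B=X+iY$ means $X=\frac{B+B^*}{2}$ and $Y=\frac{B-B^*}{2i}$, both self-adjoint. *)

theory Defs
  imports "HOL-Analysis.Analysis"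
begin

class complex_hilbert = banach +
  fixes scaleC :: "complex \<Rightarrow> 'a \<Rightarrow> 'a"
  fixes cinner :: "'a \<Rightarrow> 'a \<Rightarrow> complex"
  assumes scaleC_add_right: "scaleC a (x + y) = scaleC a x + scaleC a y"
    and scaleC_add_left: "scaleC (a + b) x = scaleC a x + scaleC b x"
    and scaleC_scaleC: "scaleC a (scaleC b x) = scaleC (a * b) x"
    and scaleC_one: "scaleC 1 x = x"
    and scaleR_scaleC: "scaleR r x = scaleC (complex_of_real r) x"
    and cinner_conj: "cinner x y = cnj (cinner y x)"
    and cinner_add_left: "cinner (x + y) z = cinner x z + cinner y z"
    and cinner_scaleC_left: "cinner (scaleC a x) y = a * cinner x y"
    and cinner_self: "cinner x x = complex_of_real ((norm x)\<^sup>2)"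

definition bounded_clinear :: "('a::complex_hilbert \<Rightarrow> 'a) \<Rightarrow> bool" where
  "bounded_clinear T \<longleftrightarrow> bounded_linear T \<and> (\<forall>a x. T (scaleC a x) = scaleC a (T x))"

definition adj :: "('a::complex_hilbert \<Rightarrow> 'a) \<Rightarrow> ('a \<Rightarrow> 'a)" where
  "adj T = (SOME S. \<forall>x y. cinner (T x) y = cinner x (S y))"

text \<open>Numerical radius (supremum over the closed unit ball; equals the supremum
  over the unit sphere whenever the space is nontrivial, and is 0 otherwise).\<close>
definition numrad :: "('a::complex_hilbert \<Rightarrow> 'a) \<Rightarrow> real" where
  "numrad T = Sup {cmod (cinner (T x) x) | x. norm x \<le> 1}"

end

theory Submission
  imports Defs
begin

text \<open>Write \<open>w\<close> for the numerical radius. Polarization bounds the symmetric form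
  \<open>\<langle>Bx, y\<rangle> + \<langle>By, x\<rangle>\<close> by \<open>2 w(B) \<parallel>x\<parallel> \<parallel>y\<parallel>\<close>, and replacing \<open>y\<close> by \<open>\<i> y\<close> does the same for
  the antisymmetric one; with \<open>y = A\<^sup>* x\<close> this is the Fong--Holbrook inequality
  \<open>w(AB \<plusminus> BA\<^sup>*) \<le> 2 \<parallel>A\<parallel> w(B)\<close>.
  It remains to show \<open>w(B)\<^sup>2 \<le> \<lambda>\<close>, where \<open>\<lambda>\<close> is the largest eigenvalue of the
  real symmetric matrix with diagonal \<open>w(X\<^sup>2), w(Y\<^sup>2)\<close> and off-diagonal \<open>w(XY + YX)/2\<close>.
  For \<open>\<parallel>z\<parallel> \<le> 1\<close> let \<open>u = \<langle>Xz, z\<rangle>\<close> and \<open>v = \<langle>Yz, z\<rangle>\<close>, both real. Then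
  \<open>|\<langle>Bz, z\<rangle>|\<^sup>2 = u\<^sup>2 + v\<^sup>2 = \<langle>uXz + vYz, z\<rangle> \<le> \<parallel>uXz + vYz\<parallel>\<close>, and
  \<open>\<parallel>uXz + vYz\<parallel>\<^sup>2 = u\<^sup>2\<langle>X\<^sup>2z, z\<rangle> + v\<^sup>2\<langle>Y\<^sup>2z, z\<rangle> + uv\<langle>(XY + YX)z, z\<rangle> \<le> (u\<^sup>2 + v\<^sup>2) \<lambda>\<close>.

  The adjoint is only specified by choice, so its defining identity needs the Riesz
  representation theorem, which we prove by producing a norm-attaining unit vector as the
  limit of a maximizing sequence (Cauchy by the parallelogram law).\<close>

section \<open>Inner product geometry\<close>

lemma scaleC_zero_left [simp]: "scaleC 0 x = 0"
  by (metis scaleR_scaleC scale_zero_left of_real_0)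

lemma cinner_zero_left [simp]: "cinner 0 y = 0"
  using cinner_add_left [of 0 0 y] by simp

lemma cinner_zero_right [simp]: "cinner y 0 = 0"
  using cinner_conj [of y 0] by simp

lemma cinner_add_right: "cinner x (y + z) = cinner x y + cinner x z"
  by (metis cinner_add_left cinner_conj complex_cnj_add)

lemma cinner_scaleC_right: "cinner x (scaleC a y) = cnj a * cinner x y"
  by (metis cinner_conj cinner_scaleC_left complex_cnj_mult)

lemma cinner_minus_left: "cinner (- x) y = - cinner x y"
  using cinner_add_left [of x "- x" y] by (simp add: minus_unique [symmetric])

lemma cinner_minus_right: "cinner x (- y) = - cinner x y"
  using cinner_add_right [of x y "- y"] by (simp add: minus_unique [symmetric])

lemma cinner_diff_left: "cinner (x - y) z = cinner x z - cinner y z"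
  using cinner_add_left [of x "- y" z] by (simp add: cinner_minus_left)

lemma cinner_diff_right: "cinner x (y - z) = cinner x y - cinner x z"
  using cinner_add_right [of x y "- z"] by (simp add: cinner_minus_right)

lemma cinner_scaleR_left: "cinner (scaleR r x) y = of_real r * cinner x y"
  by (simp add: scaleR_scaleC cinner_scaleC_left)

lemma cinner_scaleR_right: "cinner x (scaleR r y) = of_real r * cinner x y"
  by (simp add: scaleR_scaleC cinner_scaleC_right)

lemmas cinner_simps = cinner_add_left cinner_add_right cinner_diff_left cinner_diff_right
  cinner_scaleC_left cinner_scaleC_right cinner_scaleR_left cinner_scaleR_right
  cinner_minus_left cinner_minus_right

lemma power2_norm_eq_cinner: "(norm x)\<^sup>2 = Re (cinner x x)"
  by (simp add: cinner_self)

lemma norm_scaleC: "norm (scaleC a x) = cmod a * norm x"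
proof -
  have "cinner (scaleC a x) (scaleC a x) = complex_of_real ((cmod a * norm x)\<^sup>2)"
    by (simp add: cinner_simps cinner_self [of x] power_mult_distrib mult.commute [of "cnj a"]
        flip: of_real_power complex_norm_square)
  then have "(norm (scaleC a x))\<^sup>2 = (cmod a * norm x)\<^sup>2"
    by (metis Re_complex_of_real power2_norm_eq_cinner)
  then show ?thesis
    by simp
qed

lemma bounded_linear_scaleC: "bounded_linear (scaleC a)"
proof (rule bounded_linear_intro [where K = "cmod a"])
  show "scaleC a (x + y) = scaleC a x + scaleC a y" for x y
    by (rule scaleC_add_right)
  show "scaleC a (scaleR r x) = scaleR r (scaleC a x)" for r x
    by (simp add: scaleR_scaleC scaleC_scaleC mult.commute)
  show "norm (scaleC a x) \<le> norm x * cmod a" for x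
    by (simp add: norm_scaleC)
qed

lemma Cauchy_Schwarz_cinner: "cmod (cinner x y) \<le> norm x * norm y"
proof (cases "y = 0")
  case False
  define c where "c = cinner x y"
  define n where "n = (norm y)\<^sup>2"
  have "n > 0"
    using False by (simp add: n_def)
  define t where "t = c / complex_of_real n"
  have "cinner (x - scaleC t y) (x - scaleC t y)
      = cinner x x - cnj t * c - t * cinner y x + t * cnj t * cinner y y"
    by (simp add: c_def cinner_simps algebra_simps)
  also have "\<dots> = complex_of_real ((norm x)\<^sup>2 - (cmod c)\<^sup>2 / n)"
    using \<open>n > 0\<close> cinner_conj [of y x]
    by (simp add: t_def c_def cinner_self n_def [symmetric] field_simps complex_norm_square)
      (simp add: algebra_simps power2_eq_square flip: of_real_mult,
        metis complex_norm_square power2_eq_square)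
  finally have "(cmod c)\<^sup>2 / n \<le> (norm x)\<^sup>2"
    by (metis Re_complex_of_real diff_ge_0_iff_ge power2_norm_eq_cinner zero_le_power2)
  then have "(cmod c)\<^sup>2 \<le> (norm x * norm y)\<^sup>2"
    using \<open>n > 0\<close> by (simp add: n_def field_simps)
  then show ?thesis
    unfolding c_def by (rule power2_le_imp_le) simp
qed simp

lemma parallelogram_law:
  fixes x y :: "'a::complex_hilbert"
  shows "(norm (x + y))\<^sup>2 + (norm (x - y))\<^sup>2 = 2 * (norm x)\<^sup>2 + 2 * (norm y)\<^sup>2"
  by (simp add: power2_norm_eq_cinner cinner_simps)

lemma pythagoras_cinner:
  assumes "cinner x y = 0"
  shows "(norm (x + y))\<^sup>2 = (norm x)\<^sup>2 + (norm y)\<^sup>2"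
proof -
  have "cinner y x = 0"
    using assms cinner_conj [of y x] by simp
  with assms show ?thesis
    by (simp add: power2_norm_eq_cinner cinner_simps)
qed

lemma cinner_right_eqI:
  assumes "\<And>x. cinner x y = cinner x z"
  shows "y = z"
proof -
  have "(norm (y - z))\<^sup>2 = 0"
    using assms [of "y - z"] by (simp add: power2_norm_eq_cinner cinner_simps)
  then show ?thesis
    by simp
qed

section \<open>Riesz representation and the adjoint\<close>

lemma Cauchy_if_dist_le_add:
  fixes X :: "nat \<Rightarrow> 'a::metric_space"
  assumes "e \<longlonglongrightarrow> 0" and "\<And>m n. dist (X m) (X n) \<le> e m + e n"
  shows "Cauchy X"
proof (rule metric_CauchyI)
  fix \<epsilon> :: real
  assume "0 < \<epsilon>"
  then obtain M where M: "\<And>n. n \<ge> M \<Longrightarrow> \<bar>e n\<bar> < \<epsilon> / 2"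
    using LIMSEQ_D [OF assms(1), of "\<epsilon> / 2"] by auto
  have "dist (X m) (X n) < \<epsilon>" if "m \<ge> M" "n \<ge> M" for m n
    using assms(2) [of m n] M [OF that(1)] M [OF that(2)] by (simp add: abs_less_iff)
  then show "\<exists>M. \<forall>m\<ge>M. \<forall>n\<ge>M. dist (X m) (X n) < \<epsilon>"
    by blast
qed

lemma cmod_le_if_Re_le:
  fixes f :: "'a::complex_hilbert \<Rightarrow> complex"
  assumes hom: "\<And>a x. f (scaleC a x) = a * f x"
    and Re_le: "\<And>x. norm x \<le> 1 \<Longrightarrow> Re (f x) \<le> N"
  shows "cmod (f x) \<le> N * norm x"
proof (cases "f x = 0")
  case True
  have "0 \<le> N"
    using Re_le [of 0] hom [of 0 0] by simp
  with True show ?thesis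
    by simp
next
  case False
  then have "x \<noteq> 0"
    using hom [of 0 0] by auto
  \<comment> \<open>rotate and rescale \<open>x\<close> to a unit vector on which \<open>f\<close> is real and positive\<close>
  define x' where "x' = scaleC (cnj (f x) / complex_of_real (cmod (f x) * norm x)) x"
  have "norm x' = 1"
    using False \<open>x \<noteq> 0\<close> by (simp add: x'_def norm_scaleC norm_divide norm_mult)
  moreover have "f x' = complex_of_real (cmod (f x) / norm x)"
    using False \<open>x \<noteq> 0\<close>
    by (simp add: x'_def hom field_simps mult.commute [of "cnj (f x)"] flip: complex_norm_square)
      (simp add: power2_eq_square)
  ultimately have "cmod (f x) / norm x \<le> N"
    using Re_le [of x'] by simp
  with \<open>x \<noteq> 0\<close> show ?thesis
    by (simp add: field_simps)
qed

lemma norm_diff_power2_le_near_maximizers: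
  fixes f :: "'a::complex_hilbert \<Rightarrow> complex"
  assumes add: "\<And>x y. f (x + y) = f x + f y"
    and bound: "\<And>x. cmod (f x) \<le> N * norm x" and "0 < N"
    and "norm x \<le> 1" "norm y \<le> 1"
    and "N - d \<le> Re (f x)" "N - e \<le> Re (f y)"
  shows "(norm (x - y))\<^sup>2 \<le> 4 * (d + e) / N"
proof -
  define k where "k = (d + e) / N"
  have "N * (2 - k) = 2 * N - (d + e)"
    using \<open>0 < N\<close> by (simp add: k_def field_simps)
  also have "\<dots> \<le> Re (f (x + y))"
    using assms(6,7) by (simp add: add)
  also have "\<dots> \<le> N * norm (x + y)"
    using complex_Re_le_cmod bound order_trans by blast
  finally have "2 - k \<le> norm (x + y)"
    using \<open>0 < N\<close> by simp
  then have "4 - 4 * k \<le> (norm (x + y))\<^sup>2"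
  proof (cases "0 \<le> 2 - k")
    case True
    then have "(2 - k)\<^sup>2 \<le> (norm (x + y))\<^sup>2"
      using \<open>2 - k \<le> norm (x + y)\<close> by (simp add: power_mono)
    moreover have "4 - 4 * k \<le> (2 - k)\<^sup>2"
      by (simp add: power2_diff)
    ultimately show ?thesis
      by linarith
  next
    case False
    then show ?thesis
      using zero_le_power2 [of "norm (x + y)"] by linarith
  qed
  moreover have "(norm x)\<^sup>2 \<le> 1" "(norm y)\<^sup>2 \<le> 1"
    using assms(4,5) by (simp_all add: power_le_one)
  ultimately show ?thesis
    using parallelogram_law [of x y] by (simp add: k_def)
qed

lemma bounded_linear_functional:
  fixes f :: "'a::complex_hilbert \<Rightarrow> complex"
  assumes "\<And>x y. f (x + y) = f x + f y"
    and "\<And>a x. f (scaleC a x) = a * f x"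
    and "\<And>x. cmod (f x) \<le> C * norm x"
  shows "bounded_linear f"
proof (rule bounded_linear_intro [where K = C])
  show "f (scaleR r x) = scaleR r (f x)" for r x
    by (simp add: scaleR_scaleC assms(2) scaleR_conv_of_real)
qed (use assms in \<open>auto simp: mult.commute\<close>)

lemma Cauchy_near_maximizers:
  fixes f :: "'a::complex_hilbert \<Rightarrow> complex"
  assumes add: "\<And>x y. f (x + y) = f x + f y"
    and bound: "\<And>x. cmod (f x) \<le> N * norm x" and "0 < N"
    and norm_le: "\<And>n. norm (xs n) \<le> 1"
    and Re_gt: "\<And>n. N - inverse (real (Suc n)) < Re (f (xs n))"
  shows "Cauchy xs"
proof (rule Cauchy_if_dist_le_add)
  define e where "e n = sqrt (4 * inverse (real (Suc n)) / N)" for n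
  show "e \<longlonglongrightarrow> 0"
    unfolding e_def
    using tendsto_real_sqrt [OF tendsto_divide_zero [OF tendsto_mult_right_zero
          [OF LIMSEQ_inverse_real_of_nat, of 4], of N]]
    by simp
  fix m n
  have "(norm (xs m - xs n))\<^sup>2
      \<le> 4 * inverse (real (Suc m)) / N + 4 * inverse (real (Suc n)) / N"
    using norm_diff_power2_le_near_maximizers [OF add bound \<open>0 < N\<close> norm_le norm_le
        less_imp_le [OF Re_gt] less_imp_le [OF Re_gt]]
    by (simp add: add_divide_distrib)
  then have "norm (xs m - xs n)
      \<le> sqrt (4 * inverse (real (Suc m)) / N + 4 * inverse (real (Suc n)) / N)"
    by (simp add: real_le_rsqrt)
  also have "\<dots> \<le> e m + e n"
    unfolding e_def using \<open>0 < N\<close> by (intro sqrt_add_le_add_sqrt) auto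
  finally show "dist (xs m) (xs n) \<le> e m + e n"
    by (simp add: dist_norm)
qed

lemma Re_maximizer_exists:
  fixes f :: "'a::complex_hilbert \<Rightarrow> complex"
  assumes add: "\<And>x y. f (x + y) = f x + f y"
    and hom: "\<And>a x. f (scaleC a x) = a * f x"
    and bound: "\<And>x. cmod (f x) \<le> N * norm x" and "0 < N"
    and Re_le: "\<And>x. norm x \<le> 1 \<Longrightarrow> Re (f x) \<le> N"
    and near: "\<And>n. \<exists>x. norm x \<le> 1 \<and> N - inverse (real (Suc n)) < Re (f x)"
  obtains u where "norm u \<le> 1" "Re (f u) = N"
proof -
  obtain xs where norm_le: "\<And>n. norm (xs n) \<le> 1"
    and Re_gt: "\<And>n. N - inverse (real (Suc n)) < Re (f (xs n))"
    using near by metis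
  then have "Cauchy xs"
    by (rule Cauchy_near_maximizers [OF add bound \<open>0 < N\<close>])
  then obtain u where "xs \<longlonglongrightarrow> u"
    using Cauchy_convergent_iff convergent_def by blast
  have "norm u \<le> 1"
    using tendsto_norm [OF \<open>xs \<longlonglongrightarrow> u\<close>] norm_le by (intro LIMSEQ_le_const2) auto
  have "(\<lambda>n. Re (f (xs n))) \<longlonglongrightarrow> Re (f u)"
    by (intro tendsto_Re bounded_linear.tendsto [OF bounded_linear_functional [OF add hom bound]]
        \<open>xs \<longlonglongrightarrow> u\<close>)
  moreover have "(\<lambda>n. Re (f (xs n))) \<longlonglongrightarrow> N"
  proof (rule tendsto_sandwich [OF _ _ LIMSEQ_inverse_real_of_nat_add_minus [of N] tendsto_const])
    show "\<forall>\<^sub>F n in sequentially. N + - inverse (real (Suc n)) \<le> Re (f (xs n))"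
      using Re_gt by (simp add: less_imp_le)
  qed (use Re_le norm_le in simp)
  ultimately have "Re (f u) = N"
    by (rule LIMSEQ_unique)
  with \<open>norm u \<le> 1\<close> show ?thesis
    using that by blast
qed

lemma norm_attaining_vector:
  fixes f :: "'a::complex_hilbert \<Rightarrow> complex"
  assumes add: "\<And>x y. f (x + y) = f x + f y"
    and hom: "\<And>a x. f (scaleC a x) = a * f x"
    and bounded: "\<And>x. cmod (f x) \<le> C * norm x"
    and "f x\<^sub>0 \<noteq> 0"
  obtains N u where "0 < N" "norm u = 1" "f u = complex_of_real N"
    and "\<And>x. cmod (f x) \<le> N * norm x"
proof -
  define S where "S = {Re (f x) | x. norm x \<le> 1}"
  have "S \<noteq> {}"
    unfolding S_def by (auto intro: exI [of _ 0])
  have "Re (f x) \<le> \<bar>C\<bar>" if "norm x \<le> 1" for x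
    using complex_Re_le_cmod [of "f x"] bounded [of x] that
    by (smt (verit) mult_left_le mult_right_mono norm_ge_zero abs_ge_self)
  then have "bdd_above S"
    unfolding S_def by (auto intro: bdd_aboveI [where M = "\<bar>C\<bar>"])
  define N where "N = Sup S"
  have Re_le: "Re (f x) \<le> N" if "norm x \<le> 1" for x
    unfolding N_def by (rule cSup_upper [OF _ \<open>bdd_above S\<close>]) (use that S_def in auto)
  have N_bound: "cmod (f x) \<le> N * norm x" for x
    by (rule cmod_le_if_Re_le [OF hom Re_le])
  have "0 < N"
    using N_bound [of x\<^sub>0] \<open>f x\<^sub>0 \<noteq> 0\<close>
    by (smt (verit) mult_nonpos_nonneg norm_ge_zero zero_less_norm_iff)
  have "\<exists>x. norm x \<le> 1 \<and> N - inverse (real (Suc n)) < Re (f x)" for n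
    using less_cSup_iff [OF \<open>S \<noteq> {}\<close> \<open>bdd_above S\<close>, of "N - inverse (real (Suc n))"]
    by (auto simp: N_def S_def)
  then obtain u where "norm u \<le> 1" "Re (f u) = N"
    using Re_maximizer_exists [OF add hom N_bound \<open>0 < N\<close> Re_le] by blast
  have "(Re (f u))\<^sup>2 + (Im (f u))\<^sup>2 \<le> N\<^sup>2"
    using N_bound [of u] \<open>norm u \<le> 1\<close> \<open>0 < N\<close>
    by (metis cmod_power2 norm_ge_zero power_mono mult_left_le order_trans less_imp_le)
  with \<open>Re (f u) = N\<close> have "f u = complex_of_real N"
    by (simp add: complex_eq_iff)
  moreover have "norm u = 1"
    using N_bound [of u] \<open>norm u \<le> 1\<close> \<open>0 < N\<close> by (simp add: \<open>f u = complex_of_real N\<close>)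
  ultimately show ?thesis
    using that \<open>0 < N\<close> N_bound by blast
qed

lemma power2_first_order_gain:
  fixes N c a :: real
  assumes "0 < N" "0 < c" "0 \<le> a"
  defines "t \<equiv> 1 / (N * (a + 1))"
  shows "N\<^sup>2 * (1 + t\<^sup>2 * c * a) < (N + t * c)\<^sup>2"
proof -
  have "0 < t"
    using assms by (simp add: t_def)
  have "N * t * (a + 1) = 1"
    using assms by (simp add: t_def)
  then have "N * t * a < 1"
    using mult_pos_pos [OF \<open>0 < N\<close> \<open>0 < t\<close>] by (simp add: algebra_simps)
  then have "N\<^sup>2 * t * a < N"
    using \<open>0 < N\<close> by (simp add: power2_eq_square mult.assoc)
  moreover have "0 < t * c"
    using \<open>0 < t\<close> assms(2) by simp
  ultimately have "N\<^sup>2 * t * a < 2 * N + t * c"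
    using \<open>0 < N\<close> by linarith
  then have "t * c * (N\<^sup>2 * t * a) < t * c * (2 * N + t * c)"
    using \<open>0 < t * c\<close> by (rule mult_strict_left_mono)
  then show ?thesis
    by (simp add: power2_eq_square algebra_simps)
qed

lemma vanishes_if_orthogonal_to_norm_attaining_vector:
  fixes f :: "'a::complex_hilbert \<Rightarrow> complex"
  assumes add: "\<And>x y. f (x + y) = f x + f y"
    and hom: "\<And>a x. f (scaleC a x) = a * f x"
    and bound: "\<And>x. cmod (f x) \<le> N * norm x" and "0 < N"
    and "norm u = 1" "f u = complex_of_real N"
    and "cinner x u = 0"
  shows "f x = 0"
proof (rule ccontr)
  assume "f x \<noteq> 0"
  define c where "c = (cmod (f x))\<^sup>2"
  have "0 < c"
    using \<open>f x \<noteq> 0\<close> by (simp add: c_def)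
  define t where "t = 1 / (N * ((norm x)\<^sup>2 + 1))"
  have "0 < t"
    using \<open>0 < N\<close> by (simp add: t_def add_nonneg_pos)
  \<comment> \<open>moving from \<open>u\<close> in the direction of \<open>x\<close> increases \<open>f\<close> to first order but the norm
    only to second order\<close>
  define w where "w = u + scaleC (complex_of_real t * cnj (f x)) x"
  have "f w = complex_of_real (N + t * c)"
    by (simp add: w_def add hom \<open>f u = complex_of_real N\<close> c_def mult.commute [of "cnj (f x)"]
        flip: of_real_power complex_norm_square)
  then have "N + t * c \<le> N * norm w"
    using bound [of w] \<open>0 < N\<close> \<open>0 < t\<close> \<open>0 < c\<close> by (simp del: of_real_add of_real_mult)
  then have "(N + t * c)\<^sup>2 \<le> N\<^sup>2 * (norm w)\<^sup>2"
    using \<open>0 < N\<close> \<open>0 < t\<close> \<open>0 < c\<close>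
    by (metis power_mono power_mult_distrib add_pos_pos mult_pos_pos less_imp_le)
  moreover have "cinner u (scaleC (complex_of_real t * cnj (f x)) x) = 0"
    using \<open>cinner x u = 0\<close> cinner_conj [of u x] by (simp add: cinner_scaleC_right)
  then have "(norm w)\<^sup>2 = 1 + t\<^sup>2 * c * (norm x)\<^sup>2"
    using \<open>norm u = 1\<close> \<open>0 < t\<close>
    by (simp add: w_def pythagoras_cinner norm_scaleC norm_mult c_def power_mult_distrib)
  ultimately show False
    using power2_first_order_gain [OF \<open>0 < N\<close> \<open>0 < c\<close> zero_le_power2 [of "norm x"]]
    by (simp add: t_def)
qed

lemma Riesz_representation:
  fixes f :: "'a::complex_hilbert \<Rightarrow> complex"
  assumes add: "\<And>x y. f (x + y) = f x + f y"
    and hom: "\<And>a x. f (scaleC a x) = a * f x"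
    and bounded: "\<And>x. cmod (f x) \<le> C * norm x"
  shows "\<exists>z. \<forall>x. f x = cinner x z"
proof (cases "\<forall>x. f x = 0")
  case False
  then obtain N u where "0 < N" "norm u = 1" "f u = complex_of_real N"
    and N_bound: "\<And>x. cmod (f x) \<le> N * norm x"
    using norm_attaining_vector [OF add hom bounded] by blast
  have "cinner u u = 1"
    using \<open>norm u = 1\<close> by (simp add: cinner_self)
  have "f x = cinner x (scaleC (complex_of_real N) u)" for x
  proof -
    define x' where "x' = x - scaleC (cinner x u) u"
    have "f x' = 0"
      using \<open>cinner u u = 1\<close>
      by (intro vanishes_if_orthogonal_to_norm_attaining_vector [OF add hom N_bound \<open>0 < N\<close>
            \<open>norm u = 1\<close> \<open>f u = complex_of_real N\<close>]) (simp add: x'_def cinner_simps)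
    then have "f x = cinner x u * f u"
      by (metis add hom add_0 x'_def diff_add_cancel)
    then show ?thesis
      by (simp add: \<open>f u = complex_of_real N\<close> cinner_simps)
  qed
  then show ?thesis
    by blast
qed (intro exI [of _ 0], simp)

lemma cinner_adj_right:
  assumes "bounded_clinear T"
  shows "cinner (T x) y = cinner x (adj T y)"
proof -
  have "bounded_linear T" and hom: "\<And>a x. T (scaleC a x) = scaleC a (T x)"
    using assms by (auto simp: bounded_clinear_def)
  have "\<exists>z. \<forall>x. cinner (T x) y = cinner x z" for y
  proof (rule Riesz_representation [of "\<lambda>x. cinner (T x) y" "onorm T * norm y"])
    show "cinner (T (x + x')) y = cinner (T x) y + cinner (T x') y" for x x'
      by (simp add: linear_add [OF bounded_linear.linear [OF \<open>bounded_linear T\<close>]] cinner_add_left)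
    show "cinner (T (scaleC a x)) y = a * cinner (T x) y" for a x
      by (simp add: hom cinner_scaleC_left)
    show "cmod (cinner (T x) y) \<le> onorm T * norm y * norm x" for x
    proof -
      have "cmod (cinner (T x) y) \<le> norm (T x) * norm y"
        by (rule Cauchy_Schwarz_cinner)
      also have "\<dots> \<le> onorm T * norm x * norm y"
        by (intro mult_right_mono onorm [OF \<open>bounded_linear T\<close>]) simp
      finally show ?thesis
        by (simp add: mult_ac)
    qed
  qed
  then have "\<exists>S. \<forall>x y. cinner (T x) y = cinner x (S y)"
    by metis
  then have "\<forall>x y. cinner (T x) y = cinner x (adj T y)"
    unfolding adj_def by (rule someI_ex)
  then show ?thesis
    by blast
qed

lemma cinner_adj_left:
  assumes "bounded_clinear T"
  shows "cinner (adj T x) y = cinner x (T y)"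
  by (metis assms cinner_adj_right cinner_conj)

lemma norm_adj_le:
  assumes "bounded_clinear T"
  shows "norm (adj T x) \<le> onorm T * norm x"
proof -
  have "bounded_linear T"
    using assms by (simp add: bounded_clinear_def)
  have "(norm (adj T x))\<^sup>2 = cmod (cinner (T (adj T x)) x)"
    by (simp add: cinner_adj_right [OF assms] cinner_self [of "adj T x"] norm_power)
  also have "\<dots> \<le> norm (T (adj T x)) * norm x"
    by (rule Cauchy_Schwarz_cinner)
  also have "\<dots> \<le> onorm T * norm (adj T x) * norm x"
    by (intro mult_right_mono onorm [OF \<open>bounded_linear T\<close>]) simp
  finally have "norm (adj T x) * norm (adj T x) \<le> norm (adj T x) * (onorm T * norm x)"
    by (simp add: power2_eq_square mult_ac)
  then show ?thesis
    using onorm_pos_le [OF \<open>bounded_linear T\<close>]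
    by (cases "adj T x = 0") (auto simp: mult_le_cancel_left)
qed

lemma bounded_linear_adj:
  assumes "bounded_clinear T"
  shows "bounded_linear (adj T)"
proof (rule bounded_linear_intro [where K = "onorm T"])
  show "adj T (x + y) = adj T x + adj T y" for x y
    by (rule cinner_right_eqI) (simp add: cinner_adj_right [OF assms, symmetric] cinner_simps)
  show "adj T (scaleR r x) = scaleR r (adj T x)" for r x
    by (rule cinner_right_eqI) (simp add: cinner_adj_right [OF assms, symmetric] cinner_simps)
  show "norm (adj T x) \<le> norm x * onorm T" for x
    using norm_adj_le [OF assms] by (simp add: mult.commute)
qed

section \<open>Numerical radius\<close>

lemma cmod_cinner_le_onorm:
  assumes "bounded_linear T" "norm x \<le> 1"
  shows "cmod (cinner (T x) x) \<le> onorm T"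
proof -
  have "cmod (cinner (T x) x) \<le> onorm T * norm x * norm x"
    using Cauchy_Schwarz_cinner [of "T x" x] onorm [OF assms(1), of x]
    by (meson mult_right_mono norm_ge_zero order_trans)
  also have "\<dots> \<le> onorm T"
    using assms onorm_pos_le [OF assms(1)]
    by (simp add: mult_left_le mult_le_one mult.assoc)
  finally show ?thesis .
qed

lemma cmod_cinner_le_numrad:
  assumes "bounded_linear T" "norm x \<le> 1"
  shows "cmod (cinner (T x) x) \<le> numrad T"
proof -
  have "bdd_above {cmod (cinner (T x) x) | x. norm x \<le> 1}"
    by (rule bdd_aboveI [where M = "onorm T"]) (auto intro: cmod_cinner_le_onorm [OF assms(1)])
  then show ?thesis
    unfolding numrad_def by (rule cSup_upper [rotated]) (use assms(2) in auto)
qed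

lemma numrad_nonneg: "bounded_linear T \<Longrightarrow> 0 \<le> numrad T"
  using cmod_cinner_le_numrad [of T 0] by simp

lemma numrad_le:
  assumes "\<And>x. norm x \<le> 1 \<Longrightarrow> cmod (cinner (T x) x) \<le> K"
  shows "numrad T \<le> K"
  unfolding numrad_def by (rule cSup_least) (use assms in \<open>auto intro: exI [of _ 0]\<close>)

lemma cmod_cinner_le_numrad_mult_norm:
  assumes "bounded_linear T"
  shows "cmod (cinner (T x) x) \<le> numrad T * (norm x)\<^sup>2"
proof (cases "x = 0")
  case True
  then show ?thesis
    by (simp add: linear_simps [OF assms])
next
  case False
  define x' where "x' = scaleR (1 / norm x) x"
  have "cinner (T x) x = complex_of_real ((norm x)\<^sup>2) * cinner (T x') x'"
    using False by (simp add: x'_def linear_simps [OF assms] cinner_scaleR_left cinner_scaleR_right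
        power2_eq_square)
  moreover have "cmod (cinner (T x') x') \<le> numrad T"
    using False by (intro cmod_cinner_le_numrad [OF assms]) (simp add: x'_def)
  ultimately show ?thesis
    by (simp add: norm_mult norm_power mult.commute [of "(norm x)\<^sup>2"] mult_right_mono)
qed

lemma cmod_cinner_sym_le_numrad_sum:
  assumes "bounded_linear B"
  shows "cmod (cinner (B x) y + cinner (B y) x) \<le> numrad B * ((norm x)\<^sup>2 + (norm y)\<^sup>2)"
proof -
  have "2 * (cinner (B x) y + cinner (B y) x)
      = cinner (B (x + y)) (x + y) - cinner (B (x - y)) (x - y)"
    by (simp add: linear_simps [OF assms] cinner_simps algebra_simps)
  then have "2 * cmod (cinner (B x) y + cinner (B y) x)
      = cmod (cinner (B (x + y)) (x + y) - cinner (B (x - y)) (x - y))"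
    by (metis norm_mult norm_numeral)
  also have "\<dots> \<le> cmod (cinner (B (x + y)) (x + y)) + cmod (cinner (B (x - y)) (x - y))"
    by (rule norm_triangle_ineq4)
  also have "\<dots> \<le> numrad B * (norm (x + y))\<^sup>2 + numrad B * (norm (x - y))\<^sup>2"
    by (intro add_mono cmod_cinner_le_numrad_mult_norm [OF assms])
  also have "\<dots> = 2 * (numrad B * ((norm x)\<^sup>2 + (norm y)\<^sup>2))"
    by (simp only: distrib_left [symmetric] parallelogram_law)
  finally show ?thesis
    by simp
qed

lemma cmod_cinner_sym_le_numrad:
  assumes "bounded_linear B"
  shows "cmod (cinner (B x) y + cinner (B y) x) \<le> 2 * numrad B * norm x * norm y"
proof (cases "x = 0 \<or> y = 0")
  case True
  then show ?thesis
    by (auto simp: linear_simps [OF assms])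
next
  case False
  \<comment> \<open>balance the norms of the two arguments, which leaves the left-hand side unchanged\<close>
  define l where "l = sqrt (norm y / norm x)"
  have "0 < l" "l\<^sup>2 = norm y / norm x"
    using False by (simp_all add: l_def)
  have "(norm (scaleR l x))\<^sup>2 = l\<^sup>2 * (norm x)\<^sup>2"
    by (simp add: power_mult_distrib)
  also have "\<dots> = norm x * norm y"
    using \<open>l\<^sup>2 = norm y / norm x\<close> False by (simp add: field_simps power2_eq_square)
  finally have lx: "(norm (scaleR l x))\<^sup>2 = norm x * norm y" .
  have "(norm (scaleR (1 / l) y))\<^sup>2 = (norm y)\<^sup>2 / l\<^sup>2"
    by (simp add: power_mult_distrib power_divide)
  also have "\<dots> = norm x * norm y"
    using \<open>l\<^sup>2 = norm y / norm x\<close> False by (simp add: power2_eq_square)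
  finally have ly: "(norm (scaleR (1 / l) y))\<^sup>2 = norm x * norm y" .
  have "cinner (B x) y + cinner (B y) x
      = cinner (B (scaleR l x)) (scaleR (1 / l) y) + cinner (B (scaleR (1 / l) y)) (scaleR l x)"
    using \<open>0 < l\<close> by (simp add: linear_simps [OF assms] cinner_scaleR_left cinner_scaleR_right)
  also have "cmod \<dots> \<le> numrad B * ((norm (scaleR l x))\<^sup>2 + (norm (scaleR (1 / l) y))\<^sup>2)"
    by (rule cmod_cinner_sym_le_numrad_sum [OF assms])
  finally show ?thesis
    unfolding lx ly by (simp add: algebra_simps)
qed

lemma cmod_cinner_antisym_le_numrad:
  assumes "bounded_clinear B"
  shows "cmod (cinner (B x) y - cinner (B y) x) \<le> 2 * numrad B * norm x * norm y"
proof -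
  have "bounded_linear B" and hom: "\<And>a x. B (scaleC a x) = scaleC a (B x)"
    using assms by (auto simp: bounded_clinear_def)
  have "cinner (B x) (scaleC \<i> y) + cinner (B (scaleC \<i> y)) x
      = - \<i> * (cinner (B x) y - cinner (B y) x)"
    by (simp add: hom cinner_simps algebra_simps)
  then have "cmod (cinner (B x) y - cinner (B y) x)
      = cmod (cinner (B x) (scaleC \<i> y) + cinner (B (scaleC \<i> y)) x)"
    by (simp add: norm_mult)
  also have "\<dots> \<le> 2 * numrad B * norm x * norm (scaleC \<i> y)"
    by (rule cmod_cinner_sym_le_numrad [OF \<open>bounded_linear B\<close>])
  finally show ?thesis
    by (simp add: norm_scaleC)
qed

lemma norm_mult_norm_adj_le:
  assumes "bounded_clinear A" "norm x \<le> 1"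
  shows "norm x * norm (adj A x) \<le> onorm A"
proof -
  have "norm x * norm (adj A x) \<le> 1 * (onorm A * 1)"
    using assms norm_adj_le [OF assms(1), of x] onorm_pos_le [of A]
    by (intro mult_mono) (auto simp: bounded_clinear_def intro: order_trans mult_left_le)
  then show ?thesis
    by simp
qed

lemma numrad_add_adj_le:
  assumes "bounded_clinear A" "bounded_linear B"
  shows "numrad (\<lambda>x. A (B x) + B (adj A x)) \<le> 2 * onorm A * numrad B"
proof (rule numrad_le)
  fix x :: 'a
  assume "norm x \<le> 1"
  have "cmod (cinner (A (B x) + B (adj A x)) x)
      = cmod (cinner (B x) (adj A x) + cinner (B (adj A x)) x)"
    by (simp add: cinner_add_left cinner_adj_right [OF assms(1)])
  also have "\<dots> \<le> 2 * numrad B * (norm x * norm (adj A x))"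
    using cmod_cinner_sym_le_numrad [OF assms(2)] by (simp add: mult.assoc)
  also have "\<dots> \<le> 2 * numrad B * onorm A"
    by (intro mult_left_mono norm_mult_norm_adj_le [OF assms(1) \<open>norm x \<le> 1\<close>])
      (simp add: numrad_nonneg [OF assms(2)])
  finally show "cmod (cinner (A (B x) + B (adj A x)) x) \<le> 2 * onorm A * numrad B"
    by (simp add: mult_ac)
qed

lemma numrad_diff_adj_le:
  assumes "bounded_clinear A" "bounded_clinear B"
  shows "numrad (\<lambda>x. A (B x) - B (adj A x)) \<le> 2 * onorm A * numrad B"
proof (rule numrad_le)
  fix x :: 'a
  assume "norm x \<le> 1"
  have "bounded_linear B"
    using assms(2) by (simp add: bounded_clinear_def)
  have "cmod (cinner (A (B x) - B (adj A x)) x)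
      = cmod (cinner (B x) (adj A x) - cinner (B (adj A x)) x)"
    by (simp add: cinner_diff_left cinner_adj_right [OF assms(1)])
  also have "\<dots> \<le> 2 * numrad B * (norm x * norm (adj A x))"
    using cmod_cinner_antisym_le_numrad [OF assms(2)] by (simp add: mult.assoc)
  also have "\<dots> \<le> 2 * numrad B * onorm A"
    by (intro mult_left_mono norm_mult_norm_adj_le [OF assms(1) \<open>norm x \<le> 1\<close>])
      (simp add: numrad_nonneg [OF \<open>bounded_linear B\<close>])
  finally show "cmod (cinner (A (B x) - B (adj A x)) x) \<le> 2 * onorm A * numrad B"
    by (simp add: mult_ac)
qed

section \<open>Symmetric \<open>2 \<times> 2\<close> matrices\<close>

text \<open>\<open>lambda_max p q r\<close> is the larger eigenvalue of \<open>((p, r/2), (r/2, q))\<close>.\<close>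

definition lambda_max :: "real \<Rightarrow> real \<Rightarrow> real \<Rightarrow> real" where
  "lambda_max p q r = (p + q + sqrt ((p - q)\<^sup>2 + r\<^sup>2)) / 2"

lemma quadratic_form_le_lambda_max:
  fixes u v p q r :: real
  shows "u\<^sup>2 * p + v\<^sup>2 * q + u * v * r \<le> (u\<^sup>2 + v\<^sup>2) * lambda_max p q r"
proof -
  have "(u\<^sup>2 - v\<^sup>2) * (p - q) + (2 * u * v) * r
      \<le> sqrt ((u\<^sup>2 - v\<^sup>2)\<^sup>2 + (2 * u * v)\<^sup>2) * sqrt ((p - q)\<^sup>2 + r\<^sup>2)"
    using norm_cauchy_schwarz [of "Complex (u\<^sup>2 - v\<^sup>2) (2 * u * v)" "Complex (p - q) r"]
    by (simp add: inner_complex_def complex_norm)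
  also have "(u\<^sup>2 - v\<^sup>2)\<^sup>2 + (2 * u * v)\<^sup>2 = (u\<^sup>2 + v\<^sup>2)\<^sup>2"
    by (simp add: power2_eq_square algebra_simps)
  finally have "(u\<^sup>2 - v\<^sup>2) * (p - q) + (2 * u * v) * r \<le> (u\<^sup>2 + v\<^sup>2) * sqrt ((p - q)\<^sup>2 + r\<^sup>2)"
    by simp
  moreover have "2 * (u\<^sup>2 * p + v\<^sup>2 * q + u * v * r)
      = (u\<^sup>2 + v\<^sup>2) * (p + q) + ((u\<^sup>2 - v\<^sup>2) * (p - q) + (2 * u * v) * r)"
    by (simp add: algebra_simps)
  ultimately show ?thesis
    unfolding lambda_max_def by (simp add: algebra_simps)
qed

lemma add_sqrt_power2_add_mono:
  fixes s t C :: real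
  assumes "t \<le> s" "0 \<le> C"
  shows "t + sqrt (t\<^sup>2 + C) \<le> s + sqrt (s\<^sup>2 + C)"
proof -
  define S where "S = sqrt (s\<^sup>2 + C)"
  have "0 \<le> S" "S\<^sup>2 = s\<^sup>2 + C" "\<bar>s\<bar> \<le> S"
    using assms(2) by (simp_all add: S_def real_le_rsqrt)
  have "0 \<le> (s - t) * (S + s)"
    using assms(1) \<open>\<bar>s\<bar> \<le> S\<close> by (intro mult_nonneg_nonneg) auto
  then have "t\<^sup>2 + C \<le> (s - t + S)\<^sup>2"
    using \<open>S\<^sup>2 = s\<^sup>2 + C\<close> by (simp add: power2_eq_square algebra_simps)
  then have "sqrt (t\<^sup>2 + C) \<le> s - t + S"
    using assms(1) \<open>0 \<le> S\<close> by (intro real_le_lsqrt) auto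
  then show ?thesis
    by (simp add: S_def)
qed

lemma lambda_max_ge_left: "p \<le> lambda_max p q r"
proof -
  define S where "S = sqrt ((p - q)\<^sup>2 + r\<^sup>2)"
  have "p - q \<le> S"
    unfolding S_def by (rule real_le_rsqrt) simp
  then show ?thesis
    unfolding lambda_max_def S_def [symmetric] by (simp add: field_simps)
qed

lemma lambda_max_commute: "lambda_max p q r = lambda_max q p r"
  by (simp add: lambda_max_def power2_commute)

lemma lambda_max_mono_left:
  assumes "p \<le> a"
  shows "lambda_max p q r \<le> lambda_max a q r"
  using add_sqrt_power2_add_mono [of "p - q" "a - q" "r\<^sup>2"] assms
  by (simp add: lambda_max_def)

lemma lambda_max_mono:
  assumes "p \<le> a" "q \<le> b" "\<bar>r\<bar> \<le> c"
  shows "lambda_max p q r \<le> lambda_max a b c"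
proof -
  have "r\<^sup>2 \<le> c\<^sup>2"
    using assms(3) by (metis abs_ge_zero power2_abs power_mono)
  then have "lambda_max p q r \<le> lambda_max p q c"
    by (simp add: lambda_max_def)
  also have "\<dots> \<le> lambda_max a q c"
    using assms(1) by (rule lambda_max_mono_left)
  also have "\<dots> \<le> lambda_max a b c"
    using lambda_max_mono_left [OF assms(2), of a c] by (simp add: lambda_max_commute)
  finally show ?thesis .
qed

section \<open>Cartesian decomposition\<close>

definition selfadjoint :: "('a::complex_hilbert \<Rightarrow> 'a) \<Rightarrow> bool" where
  "selfadjoint T \<longleftrightarrow> (\<forall>x y. cinner (T x) y = cinner x (T y))"

lemma selfadjoint_cinner_real:
  assumes "selfadjoint T"
  shows "cinner (T x) x = complex_of_real (Re (cinner (T x) x))"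
proof -
  have "cinner (T x) x = cnj (cinner (T x) x)"
    using assms cinner_conj [of x "T x"] by (simp add: selfadjoint_def)
  then show ?thesis
    by (simp add: complex_eq_iff)
qed

lemma norm_selfadjoint_combination_power2:
  assumes "selfadjoint X" "selfadjoint Y"
  shows "(norm (scaleR u (X z) + scaleR v (Y z)))\<^sup>2
    = u\<^sup>2 * Re (cinner (X (X z)) z) + v\<^sup>2 * Re (cinner (Y (Y z)) z)
      + u * v * Re (cinner (X (Y z) + Y (X z)) z)"
  unfolding power2_norm_eq_cinner using assms
  by (simp add: selfadjoint_def cinner_simps power2_eq_square algebra_simps)

lemma cmod_cinner_power2_le_lambda_max:
  assumes X: "selfadjoint X" and Y: "selfadjoint Y" and "norm z \<le> 1"
  shows "(cmod (cinner (X z + scaleC \<i> (Y z)) z))\<^sup>2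
    \<le> lambda_max (Re (cinner (X (X z)) z)) (Re (cinner (Y (Y z)) z))
        (Re (cinner (X (Y z) + Y (X z)) z))"
    (is "_ \<le> lambda_max ?p ?q ?r")
proof -
  define u where "u = Re (cinner (X z) z)"
  define v where "v = Re (cinner (Y z) z)"
  define s where "s = u\<^sup>2 + v\<^sup>2"
  have "cinner (X z + scaleC \<i> (Y z)) z = Complex u v"
    using selfadjoint_cinner_real [OF X, of z] selfadjoint_cinner_real [OF Y, of z]
    by (simp add: cinner_simps u_def v_def complex_eq_iff)
  then have lhs: "(cmod (cinner (X z + scaleC \<i> (Y z)) z))\<^sup>2 = s"
    by (simp add: s_def cmod_power2)
  define W where "W = scaleR u (X z) + scaleR v (Y z)"
  have "cinner W z = complex_of_real s"
    using selfadjoint_cinner_real [OF X, of z] selfadjoint_cinner_real [OF Y, of z]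
    by (simp add: W_def s_def cinner_simps u_def v_def power2_eq_square)
  then have "s \<le> norm W * norm z"
    by (metis Cauchy_Schwarz_cinner Re_complex_of_real complex_Re_le_cmod order_trans)
  then have "s \<le> norm W"
    using \<open>norm z \<le> 1\<close> by (smt (verit) mult_left_le norm_ge_zero)
  moreover have "0 \<le> s"
    by (simp add: s_def)
  ultimately have "s\<^sup>2 \<le> (norm W)\<^sup>2"
    by (rule power_mono)
  also have "\<dots> \<le> s * lambda_max ?p ?q ?r"
    unfolding W_def norm_selfadjoint_combination_power2 [OF X Y] s_def
    by (rule quadratic_form_le_lambda_max)
  finally have "s * s \<le> s * lambda_max ?p ?q ?r"
    by (simp add: power2_eq_square)
  moreover have "(norm (X z))\<^sup>2 = ?p"
    using norm_selfadjoint_combination_power2 [OF X Y, of 1 z 0] by simp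
  then have "0 \<le> lambda_max ?p ?q ?r"
    using lambda_max_ge_left [of ?p ?q ?r] by (metis zero_le_power2 order_trans)
  ultimately show ?thesis
    using \<open>0 \<le> s\<close> lhs by (smt (verit) mult_le_cancel_left)
qed

definition re_part :: "('a::complex_hilbert \<Rightarrow> 'a) \<Rightarrow> 'a \<Rightarrow> 'a" where
  "re_part B = (\<lambda>x. scaleC (1/2) (B x + adj B x))"

definition im_part :: "('a::complex_hilbert \<Rightarrow> 'a) \<Rightarrow> 'a \<Rightarrow> 'a" where
  "im_part B = (\<lambda>x. scaleC (1/(2*\<i>)) (B x - adj B x))"

lemma re_part_add_im_part: "re_part B x + scaleC \<i> (im_part B x) = B x"
proof -
  have "\<i> * (1/(2*\<i>)) = 1/2"
    by simp
  then have "re_part B x + scaleC \<i> (im_part B x)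
      = scaleC (1/2) (B x + adj B x) + scaleC (1/2) (B x - adj B x)"
    by (simp only: re_part_def im_part_def scaleC_scaleC)
  also have "\<dots> = scaleC (1/2) (B x + adj B x + (B x - adj B x))"
    by (rule scaleC_add_right [symmetric])
  also have "B x + adj B x + (B x - adj B x) = scaleC 2 (B x)"
    using scaleC_add_left [of 1 1 "B x"] by (simp add: scaleC_one)
  finally show ?thesis
    by (simp add: scaleC_scaleC scaleC_one)
qed

lemma selfadjoint_re_part:
  assumes "bounded_clinear B"
  shows "selfadjoint (re_part B)"
  unfolding selfadjoint_def re_part_def
  by (simp add: cinner_simps cinner_adj_right [OF assms] cinner_adj_left [OF assms] algebra_simps)

lemma selfadjoint_im_part:
  assumes "bounded_clinear B"
  shows "selfadjoint (im_part B)"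
proof -
  have "cnj (1 / (2 * \<i>)) = - (1 / (2 * \<i>))"
    by (simp add: complex_eq_iff)
  then show ?thesis
    unfolding selfadjoint_def im_part_def
    by (simp add: cinner_simps cinner_adj_right [OF assms] cinner_adj_left [OF assms] algebra_simps)
qed

lemma bounded_linear_re_part:
  assumes "bounded_clinear B"
  shows "bounded_linear (re_part B)"
proof -
  have "bounded_linear B"
    using assms by (simp add: bounded_clinear_def)
  then show ?thesis
    unfolding re_part_def
    by (intro bounded_linear_compose [OF bounded_linear_scaleC] bounded_linear_add
        bounded_linear_adj [OF assms])
qed

lemma bounded_linear_im_part:
  assumes "bounded_clinear B"
  shows "bounded_linear (im_part B)"
proof -
  have "bounded_linear B"
    using assms by (simp add: bounded_clinear_def)
  then show ?thesis
    unfolding im_part_def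
    by (intro bounded_linear_compose [OF bounded_linear_scaleC] bounded_linear_sub
        bounded_linear_adj [OF assms])
qed

lemma numrad_power2_le_lambda_max:
  assumes "bounded_clinear B"
  shows "(numrad B)\<^sup>2
    \<le> lambda_max (numrad (re_part B \<circ> re_part B)) (numrad (im_part B \<circ> im_part B))
        (numrad (\<lambda>x. re_part B (im_part B x) + im_part B (re_part B x)))"
    (is "_ \<le> ?L")
proof -
  let ?X = "re_part B" and ?Y = "im_part B"
  have X: "bounded_linear ?X" and Y: "bounded_linear ?Y"
    using bounded_linear_re_part [OF assms] bounded_linear_im_part [OF assms] .
  have pointwise: "(cmod (cinner (B z) z))\<^sup>2 \<le> ?L" if "norm z \<le> 1" for z
  proof -
    have "(cmod (cinner (B z) z))\<^sup>2 = (cmod (cinner (?X z + scaleC \<i> (?Y z)) z))\<^sup>2"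
      by (simp add: re_part_add_im_part)
    also have "\<dots> \<le> lambda_max (Re (cinner (?X (?X z)) z)) (Re (cinner (?Y (?Y z)) z))
        (Re (cinner (?X (?Y z) + ?Y (?X z)) z))"
      by (rule cmod_cinner_power2_le_lambda_max [OF selfadjoint_re_part [OF assms]
            selfadjoint_im_part [OF assms] that])
    also have "\<dots> \<le> ?L"
    proof (rule lambda_max_mono)
      show "Re (cinner (?X (?X z)) z) \<le> numrad (?X \<circ> ?X)"
        using cmod_cinner_le_numrad [OF bounded_linear_compose [OF X X] that]
        by (simp add: comp_def) (meson complex_Re_le_cmod order_trans)
      show "Re (cinner (?Y (?Y z)) z) \<le> numrad (?Y \<circ> ?Y)"
        using cmod_cinner_le_numrad [OF bounded_linear_compose [OF Y Y] that]
        by (simp add: comp_def) (meson complex_Re_le_cmod order_trans)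
      show "\<bar>Re (cinner (?X (?Y z) + ?Y (?X z)) z)\<bar> \<le> numrad (\<lambda>x. ?X (?Y x) + ?Y (?X x))"
        using cmod_cinner_le_numrad [OF bounded_linear_add [OF bounded_linear_compose [OF X Y]
              bounded_linear_compose [OF Y X]] that]
        by (meson abs_Re_le_cmod order_trans)
    qed
    finally show ?thesis .
  qed
  have "0 \<le> ?L"
    using pointwise [of 0] by simp
  have "numrad B \<le> sqrt ?L"
    by (rule numrad_le) (use pointwise in \<open>auto intro: real_le_rsqrt\<close>)
  then have "(numrad B)\<^sup>2 \<le> (sqrt ?L)\<^sup>2"
    using assms by (intro power_mono numrad_nonneg) (auto simp: bounded_clinear_def)
  with \<open>0 \<le> ?L\<close> show ?thesis
    by simp
qed

theorem theorem2p13: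
  fixes A B X Y :: "'a::complex_hilbert \<Rightarrow> 'a"
  assumes "bounded_clinear A" and "bounded_clinear B"
    and "X = (\<lambda>x. scaleC (1/2) (B x + adj B x))"
    and "Y = (\<lambda>x. scaleC (1/(2*\<i>)) (B x - adj B x))"
  shows "(numrad (\<lambda>x. A (B x) + B (adj A x)))\<^sup>2
           \<le> 2 * (onorm A)\<^sup>2 * (numrad (X \<circ> X) + numrad (Y \<circ> Y)
              + sqrt ((numrad (X \<circ> X) - numrad (Y \<circ> Y))\<^sup>2
                      + (numrad (\<lambda>x. X (Y x) + Y (X x)))\<^sup>2))
       \<and> (numrad (\<lambda>x. A (B x) - B (adj A x)))\<^sup>2
           \<le> 2 * (onorm A)\<^sup>2 * (numrad (X \<circ> X) + numrad (Y \<circ> Y)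
              + sqrt ((numrad (X \<circ> X) - numrad (Y \<circ> Y))\<^sup>2
                      + (numrad (\<lambda>x. X (Y x) + Y (X x)))\<^sup>2))"
proof -
  let ?M = "numrad (X \<circ> X) + numrad (Y \<circ> Y)
    + sqrt ((numrad (X \<circ> X) - numrad (Y \<circ> Y))\<^sup>2 + (numrad (\<lambda>x. X (Y x) + Y (X x)))\<^sup>2)"
  have "X = re_part B" "Y = im_part B"
    using assms(3,4) by (simp_all add: re_part_def im_part_def)
  then have "(numrad B)\<^sup>2 \<le> ?M / 2"
    using numrad_power2_le_lambda_max [OF assms(2)] by (simp add: lambda_max_def)
  have bound: "(numrad T)\<^sup>2 \<le> 2 * (onorm A)\<^sup>2 * ?M"
    if "bounded_linear T" "numrad T \<le> 2 * onorm A * numrad B" for T :: "'a \<Rightarrow> 'a"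
  proof -
    have "(numrad T)\<^sup>2 \<le> 4 * (onorm A)\<^sup>2 * (numrad B)\<^sup>2"
      using power_mono [OF that(2) numrad_nonneg [OF that(1)], of 2] by (simp add: power_mult_distrib)
    also have "\<dots> \<le> 4 * (onorm A)\<^sup>2 * (?M / 2)"
      using \<open>(numrad B)\<^sup>2 \<le> ?M / 2\<close> by (intro mult_left_mono) auto
    finally show ?thesis
      by simp
  qed
  have "bounded_linear A" "bounded_linear B" "bounded_linear (adj A)"
    using assms(1,2) bounded_linear_adj by (auto simp: bounded_clinear_def)
  then have "bounded_linear (\<lambda>x. A (B x) + B (adj A x))"
    and "bounded_linear (\<lambda>x. A (B x) - B (adj A x))"
    by (auto intro: bounded_linear_add bounded_linear_sub bounded_linear_compose)
  with bound numrad_add_adj_le [OF assms(1) \<open>bounded_linear B\<close>] numrad_diff_adj_le [OF assms(1,2)]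
  show ?thesis
    by blast
qed

end
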